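(* Let $\kappa=\frac4{27}$. For every positive integer $n$ and every $x$ the following four identities hold: $$\frac{(3n+1)x}{\kappa}\,{}_3F_2\left[\begin{matrix}-n,\frac{n+1}2,\frac{n+2}2\\ \frac23,\frac43\end{matrix};x\right]+3\,{}_3F_2\left[\begin{matrix}-n-1,\frac{n+2}2,\frac{n+1}2\\ \frac13,\frac23\end{matrix};x\right]-6\,{}_3F_2\left[\begin{matrix}-n,\frac{n+1}2,\frac n2\\ \frac13,\frac23\end{matrix};x\right]+3\,{}_3F_2\left[\begin{matrix}-n+1,\frac n2,\frac{n-1}2\\ \frac13,\frac23\end{matrix};x\right]=0;$$ $$\frac{(n+1)(3n+2)x}{2\kappa}\,{}_3F_2\left[\begin{matrix}-n,\frac{n+3}2,\frac{n+2}2\\ \frac43,\frac53\end{matrix};x\right]+(3n+4)\,{}_3F_2\left[\begin{matrix}-n-1,\frac{n+2}2,\frac{n+3}2\\ \frac23,\frac43\end{matrix};x\right]-2(3n+1)\,{}_3F_2\left[\begin{matrix}-n,\frac{n+1}2,\frac{n+2}2\\ \frac23,\frac43\end{matrix};x\right]+(3n-2)\,{}_3F_2\left[\begin{matrix}-n+1,\frac n2,\frac{n+1}2\\ \frac23,\frac43\end{matrix};x\right]=0;$$ $$\frac{(n+1)x}{\kappa}\,{}_3F_2\left[\begin{matrix}-n,\frac{n+3}2,\frac{n+2}2\\ \frac23,\frac43\end{matrix};x\right]+{}_3F_2\left[\begin{matrix}-n-1,\frac{n+2}2,\frac{n+3}2\\ \frac13,\frac23\end{matrix};x\right]-2\,{}_3F_2\left[\begin{matrix}-n,\frac{n+1}2,\frac{n+2}2\\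 \frac13,\frac23\end{matrix};x\right]+{}_3F_2\left[\begin{matrix}-n+1,\frac n2,\frac{n+1}2\\ \frac13,\frac23\end{matrix};x\right]=0;$$ $$\frac{(n+1)(n+2)x}{2\kappa}\,{}_3F_2\left[\begin{matrix}-n,\frac{n+4}2,\frac{n+3}2\\ \frac43,\frac53\end{matrix};x\right]+(n+2)\,{}_3F_2\left[\begin{matrix}-n-1,\frac{n+4}2,\frac{n+3}2\\ \frac23,\frac43\end{matrix};x\right]-2(n+1)\,{}_3F_2\left[\begin{matrix}-n,\frac{n+3}2,\frac{n+2}2\\ \frac23,\frac43\end{matrix};x\right]+n\,{}_3F_2\left[\begin{matrix}-n+1,\frac{n+2}2,\frac{n+1}2\\ \frac23,\frac43\end{matrix};x\right]=0.$$
   Context: ${}_3F_2\left[\begin{matrix}a_1,a_2,a_3\\ b_1,b_2\end{matrix};x\right]=\sum_{k\ge0}\frac{(a_1)_k(a_2)_k(a_3)_k}{(b_1)_k(b_2)_k}\frac{x^k}{k!}$, $(x)_k=x(x+1)\cdots(x+k-1)$, $(x)_0=1$; with $a_1$ a nonpositive integer these are polynomials in $x$. *)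

theory Defs
  imports "HOL-Analysis.Analysis"
begin

text \<open>In the statement a1 is always a nonpositive integer, so the series terminates.\<close>
definition hyp3F2 :: "complex \<Rightarrow> complex \<Rightarrow> complex \<Rightarrow> complex \<Rightarrow> complex \<Rightarrow> complex \<Rightarrow> complex" where
  "hyp3F2 a1 a2 a3 b1 b2 x =
     (\<Sum>k. pochhammer a1 k * pochhammer a2 k * pochhammer a3 k
           / (pochhammer b1 k * pochhammer b2 k) * x ^ k / fact k)"

definition kappa :: complex where "kappa = 4 / 27"

end

theory Submission
  imports Defs
begin

text \<open>The duplication formula (c/2)_k ((c+1)/2)_k = (c)_2k / 4^k and its triplication analogue
  (r/3)_k ((r+1)/3)_k ((r+2)/3)_k = (r)_3k / 27^k, where one of r/3, (r+1)/3, (r+2)/3 is 1 and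
  cancels k!, turn every 3F2 of the theorem into sum_k (-m)_k (c)_2k / (r)_3k (x/kappa)^k with
  r in {1, 2, 3}; the factors 4^k and 27^k are absorbed exactly by kappa = 4/27. Each identity
  then says, coefficient by coefficient, that a weighted second difference of level-r
  coefficients at index k + 1, taken along (a, c) -> (a - 1, c + 1), (a, c), (a + 1, c - 1), is a
  multiple of the level-(r + 1) coefficient at index k. Cancelling the common Pochhammer factors
  leaves a polynomial identity in k.\<close>

lemma pochhammer_triple:
  fixes z :: "'a::field_char_0"
  shows "pochhammer (3 * z) (3 * n) =
    27^n * pochhammer z n * pochhammer (z + 1/3) n * pochhammer (z + 2/3) n"
proof (induction n)
  case 0
  show ?case by simp
next
  case (Suc n)
  have "pochhammer (3 * z) (3 * Suc n) = pochhammer (3 * z) (3 * n) *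
      ((3 * (z + of_nat n)) * (3 * (z + of_nat n) + 1) * (3 * (z + of_nat n) + 2))"
    by (simp add: pochhammer_product' eval_nat_numeral pochhammer_Suc algebra_simps)
  also note Suc.IH
  also have "27^n * pochhammer z n * pochhammer (z + 1/3) n * pochhammer (z + 2/3) n *
      ((3 * (z + of_nat n)) * (3 * (z + of_nat n) + 1) * (3 * (z + of_nat n) + 2)) =
    27^Suc n * pochhammer z (Suc n) * pochhammer (z + 1/3) (Suc n) * pochhammer (z + 2/3) (Suc n)"
    by (simp add: field_simps pochhammer_Suc)
  finally show ?case .
qed

lemma pochhammer_thirds:
  shows "27^k * pochhammer (1/3) k * pochhammer (2/3) k * fact k = (pochhammer 1 (3*k) :: complex)"
    and "27^k * pochhammer (2/3) k * pochhammer (4/3) k * fact k = (pochhammer 2 (3*k) :: complex)"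
    and "27^k * pochhammer (4/3) k * pochhammer (5/3) k * fact k = (pochhammer 3 (3*k) :: complex)"
  using pochhammer_triple[of "1/3 :: complex" k] pochhammer_triple[of "2/3 :: complex" k]
    pochhammer_triple[of "1 :: complex" k]
  by (simp_all add: pochhammer_fact mult_ac)

lemma pochhammer_half_pair:
  fixes c :: "'a::field_char_0"
  shows "4^k * pochhammer (c/2) k * pochhammer ((c + 1)/2) k = pochhammer c (2*k)"
  using pochhammer_double[of "c/2" k] by (simp add: add_divide_distrib power_mult)

lemma hyp3F2_swap: "hyp3F2 a1 a2 a3 b1 b2 x = hyp3F2 a1 a3 a2 b1 b2 x"
  unfolding hyp3F2_def by (simp add: mult_ac)

definition hyp_coeff :: "nat \<Rightarrow> complex \<Rightarrow> complex \<Rightarrow> nat \<Rightarrow> complex" where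
  "hyp_coeff r a c k = pochhammer a k * pochhammer c (2*k) / pochhammer (of_nat r) (3*k)"

lemma hyp3F2_eq_sum_hyp_coeff:
  fixes a1 a2 a3 b1 b2 c x :: complex
  assumes upper: "\<And>k. 4^k * pochhammer a2 k * pochhammer a3 k = pochhammer c (2*k)"
    and lower: "\<And>k. 27^k * pochhammer b1 k * pochhammer b2 k * fact k = pochhammer (of_nat r) (3*k)"
    and "a1 = - of_nat m" "m < M"
  shows "hyp3F2 a1 a2 a3 b1 b2 x = (\<Sum>k<M. hyp_coeff r a1 c k * (x / kappa)^k)"
proof -
  have "pochhammer a1 k * pochhammer a2 k * pochhammer a3 k / (pochhammer b1 k * pochhammer b2 k)
      * x^k / fact k = hyp_coeff r a1 c k * (x / kappa)^k" for k
  proof -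
    have "pochhammer a1 k * pochhammer a2 k * pochhammer a3 k / (pochhammer b1 k * pochhammer b2 k)
        * x^k / fact k
      = pochhammer a1 k * (4^k * pochhammer a2 k * pochhammer a3 k) * (27/4)^k * x^k
        / (27^k * pochhammer b1 k * pochhammer b2 k * fact k)"
      by (simp add: field_simps)
    also have "\<dots> = pochhammer a1 k * pochhammer c (2*k) * (27/4)^k * x^k / pochhammer (of_nat r) (3*k)"
      by (simp only: upper lower)
    also have "\<dots> = hyp_coeff r a1 c k * (x / kappa)^k"
      by (simp add: hyp_coeff_def kappa_def field_simps)
    finally show ?thesis .
  qed
  moreover have "pochhammer a1 k = 0" if "k \<notin> {..<M}" for k
    using that assms(3,4) pochhammer_of_nat_eq_0_lemma[of m k] by simp
  ultimately show ?thesis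
    unfolding hyp3F2_def by (subst suminf_finite[of "{..<M}"]) auto
qed

text \<open>Dividing the recurrence by (a)_k (c+1)_2k / (a (r)_(3k+3)) turns it into the polynomial
  hypothesis; the factor 1/a, hence a \<noteq> 0, comes from (a+1)_(k+1) = (a)_k (a+k) (a+k+1) / a.\<close>

lemma hyp_coeff_three_term:
  fixes a c A \<alpha> \<beta> \<gamma> :: complex
  assumes "a \<noteq> 0" "r \<ge> 1"
    and poly: "\<alpha> * a * (a - 1) * (c + 2 * of_nat k + 1) * (c + 2 * of_nat k + 2)
      + \<beta> * a * (a + of_nat k) * c * (c + 2 * of_nat k + 1)
      + \<gamma> * (a + of_nat k) * (a + of_nat k + 1) * (c - 1) * c
      = - A * a * (of_nat r * (of_nat r + 3 * of_nat k + 1) * (of_nat r + 3 * of_nat k + 2))"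
  shows "\<alpha> * hyp_coeff r (a - 1) (c + 1) (Suc k) + \<beta> * hyp_coeff r a c (Suc k)
      + \<gamma> * hyp_coeff r (a + 1) (c - 1) (Suc k) = - A * hyp_coeff (Suc r) a (c + 1) k"
proof -
  define P where "P = pochhammer a k"
  define Q where "Q = pochhammer (c + 1) (2*k)"
  define D where "D = pochhammer (of_nat (Suc r) :: complex) (3*k)"
  define \<rho> where
    "\<rho> = of_nat r * (of_nat r + 3 * of_nat k + 1) * (of_nat r + 3 * of_nat k + 2 :: complex)"
  have "D \<noteq> 0"
    using pochhammer_pos[of "Suc r" "3*k"] unfolding D_def
    by (simp add: pochhammer_of_nat del: of_nat_Suc)
  have "\<rho> = of_nat (r * (r + 3 * k + 1) * (r + 3 * k + 2))"
    unfolding \<rho>_def by (simp add: algebra_simps)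
  then have "\<rho> \<noteq> 0"
    using \<open>r \<ge> 1\<close> by (simp del: of_nat_mult of_nat_add)
  have a_minus_1: "pochhammer (a - 1) (Suc k) = (a - 1) * P"
    unfolding P_def by (simp add: pochhammer_rec)
  have a_0: "pochhammer a (Suc k) = P * (a + of_nat k)"
    unfolding P_def by (simp add: pochhammer_Suc)
  have a_plus_1: "pochhammer (a + 1) (Suc k) = P * (a + of_nat k) * (a + of_nat k + 1) / a"
    using pochhammer_rec[of a "Suc k"] \<open>a \<noteq> 0\<close> unfolding P_def
    by (simp add: pochhammer_Suc field_simps)
  have two: "2 * Suc k = Suc (Suc (2 * k))" and three: "3 * Suc k = Suc (Suc (Suc (3 * k)))"
    by simp_all
  have c_plus_1: "pochhammer (c + 1) (2 * Suc k) = Q * (c + 2 * of_nat k + 1) * (c + 2 * of_nat k + 2)"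
    unfolding Q_def two by (simp add: pochhammer_Suc algebra_simps)
  have c_0: "pochhammer c (2 * Suc k) = c * Q * (c + 2 * of_nat k + 1)"
    unfolding Q_def two by (subst pochhammer_rec) (simp add: pochhammer_Suc algebra_simps)
  have c_minus_1: "pochhammer (c - 1) (2 * Suc k) = (c - 1) * c * Q"
    unfolding Q_def two by (simp add: pochhammer_rec)
  have denom: "pochhammer (of_nat r) (3 * Suc k) = D * \<rho>"
    unfolding D_def \<rho>_def three by (subst pochhammer_rec) (simp add: pochhammer_Suc algebra_simps)
  have "\<alpha> * hyp_coeff r (a - 1) (c + 1) (Suc k) + \<beta> * hyp_coeff r a c (Suc k)
      + \<gamma> * hyp_coeff r (a + 1) (c - 1) (Suc k)
    = P * Q / (a * D * \<rho>) * (\<alpha> * a * (a - 1) * (c + 2 * of_nat k + 1) * (c + 2 * of_nat k + 2)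
      + \<beta> * a * (a + of_nat k) * c * (c + 2 * of_nat k + 1)
      + \<gamma> * (a + of_nat k) * (a + of_nat k + 1) * (c - 1) * c)"
    using \<open>a \<noteq> 0\<close> \<open>D \<noteq> 0\<close> \<open>\<rho> \<noteq> 0\<close>
    unfolding hyp_coeff_def a_minus_1 a_0 a_plus_1 c_plus_1 c_0 c_minus_1 denom
    by (simp add: field_simps)
  also have "\<dots> = P * Q / (a * D * \<rho>) * (- A * a * \<rho>)"
    by (simp only: poly[folded \<rho>_def])
  also have "\<dots> = - A * hyp_coeff (Suc r) a (c + 1) k"
    using \<open>a \<noteq> 0\<close> \<open>\<rho> \<noteq> 0\<close> unfolding hyp_coeff_def P_def Q_def D_def
    by (simp add: field_simps)
  finally show ?thesis .
qed

lemma sum_shifted_coeffs: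
  fixes E T :: "nat \<Rightarrow> 'a::comm_ring_1"
  assumes "E 0 = 0" and "\<And>k. E (Suc k) = - K * T k"
  shows "(\<Sum>k<Suc M. E k * y^k) = - K * y * (\<Sum>k<M. T k * y^k)"
proof -
  have "(\<Sum>k<Suc M. E k * y^k) = (\<Sum>k<M. E (Suc k) * y^Suc k)"
    unfolding sum.lessThan_Suc_shift using assms(1) by simp
  also have "\<dots> = - K * y * (\<Sum>k<M. T k * y^k)"
    using assms(2) by (simp add: sum_distrib_left algebra_simps)
  finally show ?thesis .
qed

lemma hyp3F2_three_term_relation:
  fixes m r :: nat and c A \<alpha> \<beta> \<gamma> x :: complex
  defines "a \<equiv> - of_nat m :: complex"
  assumes "m \<ge> 1" "r \<ge> 1"
    and lower: "\<And>k. 27^k * pochhammer b1 k * pochhammer b2 k * fact k = pochhammer (of_nat r) (3*k)"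
    and lower': "\<And>k. 27^k * pochhammer b1' k * pochhammer b2' k * fact k
      = pochhammer (of_nat (Suc r)) (3*k)"
    and "\<alpha> + \<beta> + \<gamma> = 0"
    and poly: "\<And>k. \<alpha> * a * (a - 1) * (c + 2 * of_nat k + 1) * (c + 2 * of_nat k + 2)
      + \<beta> * a * (a + of_nat k) * c * (c + 2 * of_nat k + 1)
      + \<gamma> * (a + of_nat k) * (a + of_nat k + 1) * (c - 1) * c
      = - A * a * (of_nat r * (of_nat r + 3 * of_nat k + 1) * (of_nat r + 3 * of_nat k + 2))"
  shows "A * x / kappa * hyp3F2 a ((c + 1)/2) ((c + 2)/2) b1' b2' x
      + \<alpha> * hyp3F2 (a - 1) ((c + 1)/2) ((c + 2)/2) b1 b2 x
      + \<beta> * hyp3F2 a (c/2) ((c + 1)/2) b1 b2 x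
      + \<gamma> * hyp3F2 (a + 1) ((c - 1)/2) (c/2) b1 b2 x = 0"
proof -
  have "a \<noteq> 0"
    using \<open>m \<ge> 1\<close> unfolding a_def by simp
  have shifted: "a - 1 = - of_nat (Suc m)" "a + 1 = - of_nat (m - 1)"
    using \<open>m \<ge> 1\<close> unfolding a_def by (simp_all add: of_nat_diff)
  have upper:
    "\<And>k. 4^k * pochhammer ((c + 1)/2) k * pochhammer ((c + 2)/2) k = pochhammer (c + 1) (2*k)"
    "\<And>k. 4^k * pochhammer (c/2) k * pochhammer ((c + 1)/2) k = pochhammer c (2*k)"
    "\<And>k. 4^k * pochhammer ((c - 1)/2) k * pochhammer (c/2) k = pochhammer (c - 1) (2*k)"
    using pochhammer_half_pair[where c = "c + 1"] pochhammer_half_pair[where c = c]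
      pochhammer_half_pair[where c = "c - 1"]
    by (simp_all add: add.assoc)
  have F0: "hyp3F2 a ((c + 1)/2) ((c + 2)/2) b1' b2' x
      = (\<Sum>k<Suc m. hyp_coeff (Suc r) a (c + 1) k * (x / kappa)^k)"
    by (rule hyp3F2_eq_sum_hyp_coeff[OF upper(1) lower', where m = m]) (simp_all add: a_def)
  have F1: "hyp3F2 (a - 1) ((c + 1)/2) ((c + 2)/2) b1 b2 x
      = (\<Sum>k<Suc (Suc m). hyp_coeff r (a - 1) (c + 1) k * (x / kappa)^k)"
    by (rule hyp3F2_eq_sum_hyp_coeff[OF upper(1) lower shifted(1)]) simp
  have F2: "hyp3F2 a (c/2) ((c + 1)/2) b1 b2 x
      = (\<Sum>k<Suc (Suc m). hyp_coeff r a c k * (x / kappa)^k)"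
    by (rule hyp3F2_eq_sum_hyp_coeff[OF upper(2) lower, where m = m]) (simp_all add: a_def)
  have F3: "hyp3F2 (a + 1) ((c - 1)/2) (c/2) b1 b2 x
      = (\<Sum>k<Suc (Suc m). hyp_coeff r (a + 1) (c - 1) k * (x / kappa)^k)"
    by (rule hyp3F2_eq_sum_hyp_coeff[OF upper(3) lower shifted(2)]) simp
  have "\<alpha> * hyp3F2 (a - 1) ((c + 1)/2) ((c + 2)/2) b1 b2 x + \<beta> * hyp3F2 a (c/2) ((c + 1)/2) b1 b2 x
      + \<gamma> * hyp3F2 (a + 1) ((c - 1)/2) (c/2) b1 b2 x
    = (\<Sum>k<Suc (Suc m). (\<alpha> * hyp_coeff r (a - 1) (c + 1) k + \<beta> * hyp_coeff r a c k
        + \<gamma> * hyp_coeff r (a + 1) (c - 1) k) * (x / kappa)^k)"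
    unfolding F1 F2 F3 by (simp add: sum.distrib sum_distrib_left algebra_simps del: sum.lessThan_Suc)
  also have "\<dots> = - A * (x / kappa) * hyp3F2 a ((c + 1)/2) ((c + 2)/2) b1' b2' x"
    unfolding F0
  proof (rule sum_shifted_coeffs)
    show "\<alpha> * hyp_coeff r (a - 1) (c + 1) 0 + \<beta> * hyp_coeff r a c 0
        + \<gamma> * hyp_coeff r (a + 1) (c - 1) 0 = 0"
      using \<open>\<alpha> + \<beta> + \<gamma> = 0\<close> by (simp add: hyp_coeff_def)
  qed (rule hyp_coeff_three_term[OF \<open>a \<noteq> 0\<close> \<open>r \<ge> 1\<close> poly])
  finally show ?thesis
    by (simp add: eq_neg_iff_add_eq_0 algebra_simps)
qed

theorem proposition8:
  fixes n :: nat and x :: complex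
  assumes "n \<ge> 1"
  defines "N \<equiv> (of_nat n :: complex)"
  shows
   "(3*N+1)*x/kappa * hyp3F2 (-N) ((N+1)/2) ((N+2)/2) (2/3) (4/3) x
      + 3 * hyp3F2 (-N-1) ((N+2)/2) ((N+1)/2) (1/3) (2/3) x
      - 6 * hyp3F2 (-N) ((N+1)/2) (N/2) (1/3) (2/3) x
      + 3 * hyp3F2 (-N+1) (N/2) ((N-1)/2) (1/3) (2/3) x = 0 \<and>
    (N+1)*(3*N+2)*x/(2*kappa) * hyp3F2 (-N) ((N+3)/2) ((N+2)/2) (4/3) (5/3) x
      + (3*N+4) * hyp3F2 (-N-1) ((N+2)/2) ((N+3)/2) (2/3) (4/3) x
      - 2*(3*N+1) * hyp3F2 (-N) ((N+1)/2) ((N+2)/2) (2/3) (4/3) x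
      + (3*N-2) * hyp3F2 (-N+1) (N/2) ((N+1)/2) (2/3) (4/3) x = 0 \<and>
    (N+1)*x/kappa * hyp3F2 (-N) ((N+3)/2) ((N+2)/2) (2/3) (4/3) x
      + hyp3F2 (-N-1) ((N+2)/2) ((N+3)/2) (1/3) (2/3) x
      - 2 * hyp3F2 (-N) ((N+1)/2) ((N+2)/2) (1/3) (2/3) x
      + hyp3F2 (-N+1) (N/2) ((N+1)/2) (1/3) (2/3) x = 0 \<and>
    (N+1)*(N+2)*x/(2*kappa) * hyp3F2 (-N) ((N+4)/2) ((N+3)/2) (4/3) (5/3) x
      + (N+2) * hyp3F2 (-N-1) ((N+4)/2) ((N+3)/2) (2/3) (4/3) x
      - 2*(N+1) * hyp3F2 (-N) ((N+3)/2) ((N+2)/2) (2/3) (4/3) x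
      + N * hyp3F2 (-N+1) ((N+2)/2) ((N+1)/2) (2/3) (4/3) x = 0"
proof -
  have thirds:
    "\<And>k. 27^k * pochhammer (1/3) k * pochhammer (2/3) k * fact k
      = pochhammer (of_nat 1 :: complex) (3*k)"
    "\<And>k. 27^k * pochhammer (2/3) k * pochhammer (4/3) k * fact k
      = pochhammer (of_nat 2 :: complex) (3*k)"
    using pochhammer_thirds(1,2) by simp_all
  show ?thesis
    using hyp3F2_three_term_relation[OF assms(1) _ thirds(1), where b1' = "2/3" and b2' = "4/3"
        and c = N and \<alpha> = 3 and \<beta> = "-6" and \<gamma> = 3 and A = "3*N + 1" and x = x]
      hyp3F2_three_term_relation[OF assms(1) _ thirds(2), where b1' = "4/3" and b2' = "5/3"
        and c = "N + 1" and \<alpha> = "3*N + 4" and \<beta> = "-2*(3*N + 1)" and \<gamma> = "3*N - 2"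
        and A = "(N + 1)*(3*N + 2)/2" and x = x]
      hyp3F2_three_term_relation[OF assms(1) _ thirds(1), where b1' = "2/3" and b2' = "4/3"
        and c = "N + 1" and \<alpha> = 1 and \<beta> = "-2" and \<gamma> = 1 and A = "N + 1" and x = x]
      hyp3F2_three_term_relation[OF assms(1) _ thirds(2), where b1' = "4/3" and b2' = "5/3"
        and c = "N + 2" and \<alpha> = "N + 2" and \<beta> = "-2*(N + 1)" and \<gamma> = N
        and A = "(N + 1)*(N + 2)/2" and x = x]
    \<comment> \<open>the second call also proves the four polynomial hypotheses, by ring normalisation\<close>
    by (simp add: pochhammer_thirds) (simp add: N_def hyp3F2_swap algebra_simps)
qed

end
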